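(* For any categorial sequential allocation mechanism $f_\mathcal O$ and any assignment of each agent as optimistic or pessimistic, there exists a profile $P$ such that for all agents $j$: (1) if $j$ is optimistic, then the rank of the bundle allocated to $j$ is exactly $n^p+1-\prod_{l=K_j}^{p}k_{j,\mathcal O_j(l)}$; (2) if $j$ is pessimistic, then the rank of the bundle allocated to $j$ is exactly $n^p-\sum_{l=1}^{p}(k_{j,\mathcal O_j(l)}-1)$; and moreover (3) there exists an allocation in which at least $n-1$ agents get their top-ranked bundles and the remaining agent gets her top-ranked or second-ranked bundle.
   Context: Basic categorized domain: $n$ agents, $p$ categories $D_i=\{1,\ldots,n\}$ of indivisible items, bundles $\mathfrak D=D_1\times\cdots\times D_p$; each agent $j$ has a linear order $R_j$ over $\mathfrak D$ (a profile is $(R_1,\ldots,R_n)$). An allocation gives each agent one bundle so that each item of each category goes to exactly one agent. The rank of a bundle in $R$ is its position, the top having rank $1$ and the bottom rank $n^p$. CSAM $f_\mathcal O$: given a linear order $\mathcal O$ over $\{1,\ldots,n\}\times\{1,\ldots,p\}$, in rounds $t=1,\ldots,np$, if the $t$-th element of $\mathcal O$ is $(j,i)$ then agent $j$ chooses an item $d_{j,i}$ from $D_{i,t}$, the items of $D_i$ not yet chosen at the start of round $t$. Agent $j$ receives $(d_{j,1},\ldots,d_{j,p})$. Each agent is fixed in advance to be optimistic or pessimistic. When agent $j$ chooses from $D_i$ in round $t$, a bundle is available to her if for each category $l$ from which she has already chosen its $l$-th component equals $d_{j,l}$, and for each other category $l$ its $l$-th component lies in $D_{l,t}$. An optimistic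 agent chooses the $i$-th component of her top-ranked available bundle. A pessimistic agent chooses the $d\in D_{i,t}$ for which her lowest-ranked available bundle with $i$-th component $d$ is highest in $R_j$. Notation: $\mathcal O_j(l)$ is the $l$-th category agent $j$ chooses from in $\mathcal O$. $k_{j,i}$ is $n$ minus the number of agents who choose from $D_i$ before $j$ in $\mathcal O$. $K_j$ is the smallest $K\in\{1,\ldots,p\}$ such that for every $l$ with $K<l\leq p$, no agent chooses from category $\mathcal O_j(l)$ in any round strictly between the rounds of $(j,\mathcal O_j(K))$ and $(j,\mathcal O_j(l))$. *)

theory Defs
  imports Main
begin

text \<open>Conventions: agents are 0..n-1, categories are 0..p-1, the items of every
category are 0..n-1. A bundle is a list of length p whose i-th entry is the item
of category i. A preference is a linear order R on the set of bundles, where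
(a,b) \<in> R means that a is ranked at or above b.\<close>

definition bundles :: "nat \<Rightarrow> nat \<Rightarrow> nat list set" where
  "bundles n p = {b. length b = p \<and> (\<forall>i<p. b ! i < n)}"

definition is_pref :: "nat \<Rightarrow> nat \<Rightarrow> nat list rel \<Rightarrow> bool" where
  "is_pref n p R \<longleftrightarrow> linear_order_on (bundles n p) R"

definition is_profile :: "nat \<Rightarrow> nat \<Rightarrow> (nat \<Rightarrow> nat list rel) \<Rightarrow> bool" where
  "is_profile n p P \<longleftrightarrow> (\<forall>j<n. is_pref n p (P j))"

text \<open>Rank = position in the order (top has rank 1).\<close>
definition rank :: "nat \<Rightarrow> nat \<Rightarrow> nat list rel \<Rightarrow> nat list \<Rightarrow> nat" where
  "rank n p R b = card {a \<in> bundles n p. (a, b) \<in> R}"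

text \<open>An order O over agents \<times> categories, as the list of its elements.\<close>
definition valid_order :: "nat \<Rightarrow> nat \<Rightarrow> (nat \<times> nat) list \<Rightarrow> bool" where
  "valid_order n p Ord \<longleftrightarrow> distinct Ord \<and> set Ord = {0..<n} \<times> {0..<p}"

type_synonym state = "nat \<Rightarrow> nat \<Rightarrow> nat option"
  \<comment> \<open>s j i = Some d: agent j has already chosen item d from category i\<close>

definition remaining :: "nat \<Rightarrow> state \<Rightarrow> nat \<Rightarrow> nat set" where
  "remaining n s i = {d. d < n \<and> \<not> (\<exists>j. s j i = Some d)}"

definition available :: "nat \<Rightarrow> nat \<Rightarrow> state \<Rightarrow> nat \<Rightarrow> nat list set" where
  "available n p s j = {b \<in> bundles n p. \<forall>l<p.
     (case s j l of Some d \<Rightarrow> b ! l = d | None \<Rightarrow> b ! l \<in> remaining n s l)}"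

definition opt_choice :: "nat \<Rightarrow> nat \<Rightarrow> nat list rel \<Rightarrow> state \<Rightarrow> nat \<Rightarrow> nat \<Rightarrow> nat" where
  "opt_choice n p R s j i =
     (THE b. b \<in> available n p s j \<and> (\<forall>b'\<in>available n p s j. (b, b') \<in> R)) ! i"

definition worst :: "nat \<Rightarrow> nat \<Rightarrow> nat list rel \<Rightarrow> state \<Rightarrow> nat \<Rightarrow> nat \<Rightarrow> nat \<Rightarrow> nat list" where
  "worst n p R s j i d =
     (THE b. b \<in> available n p s j \<and> b ! i = d \<and>
        (\<forall>b'\<in>available n p s j. b' ! i = d \<longrightarrow> (b', b) \<in> R))"

definition pess_choice :: "nat \<Rightarrow> nat \<Rightarrow> nat list rel \<Rightarrow> state \<Rightarrow> nat \<Rightarrow> nat \<Rightarrow> nat" where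
  "pess_choice n p R s j i =
     (THE d. d \<in> remaining n s i \<and>
        (\<forall>d'\<in>remaining n s i. (worst n p R s j i d, worst n p R s j i d') \<in> R))"

text \<open>optim j = True: agent j is optimistic; False: pessimistic.\<close>
definition step :: "nat \<Rightarrow> nat \<Rightarrow> (nat \<Rightarrow> bool) \<Rightarrow> (nat \<Rightarrow> nat list rel) \<Rightarrow>
    nat \<times> nat \<Rightarrow> state \<Rightarrow> state" where
  "step n p optim P x s = (case x of (j, i) \<Rightarrow>
     s(j := (s j)(i := Some (if optim j then opt_choice n p (P j) s j i
                                       else pess_choice n p (P j) s j i))))"

definition csam_state :: "nat \<Rightarrow> nat \<Rightarrow> (nat \<times> nat) list \<Rightarrow> (nat \<Rightarrow> bool) \<Rightarrow>
    (nat \<Rightarrow> nat list rel) \<Rightarrow> state" where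
  "csam_state n p Ord optim P = fold (step n p optim P) Ord (\<lambda>_ _. None)"

definition csam :: "nat \<Rightarrow> nat \<Rightarrow> (nat \<times> nat) list \<Rightarrow> (nat \<Rightarrow> bool) \<Rightarrow>
    (nat \<Rightarrow> nat list rel) \<Rightarrow> nat \<Rightarrow> nat list" where
  "csam n p Ord optim P j = map (\<lambda>i. the (csam_state n p Ord optim P j i)) [0..<p]"

text \<open>Position (0-based round index) of an element in Ord.\<close>
definition pos :: "(nat \<times> nat) list \<Rightarrow> nat \<times> nat \<Rightarrow> nat" where
  "pos Ord x = (LEAST t. t < length Ord \<and> Ord ! t = x)"

text \<open>O_j(l), for l = 1..p: the l-th category agent j chooses from.\<close>
definition Oj :: "(nat \<times> nat) list \<Rightarrow> nat \<Rightarrow> nat \<Rightarrow> nat" where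
  "Oj Ord j l = map snd (filter (\<lambda>x. fst x = j) Ord) ! (l - 1)"

definition kk :: "nat \<Rightarrow> (nat \<times> nat) list \<Rightarrow> nat \<Rightarrow> nat \<Rightarrow> nat" where
  "kk n Ord j i = n - card {a. \<exists>t < pos Ord (j, i). Ord ! t = (a, i)}"

definition Kj :: "nat \<Rightarrow> (nat \<times> nat) list \<Rightarrow> nat \<Rightarrow> nat" where
  "Kj p Ord j = (LEAST K. 1 \<le> K \<and> K \<le> p \<and>
     (\<forall>l. K < l \<and> l \<le> p \<longrightarrow>
        \<not> (\<exists>t. pos Ord (j, Oj Ord j K) < t \<and> t < pos Ord (j, Oj Ord j l) \<and> snd (Ord ! t) = Oj Ord j l)))"

definition is_allocation :: "nat \<Rightarrow> nat \<Rightarrow> (nat \<Rightarrow> nat list) \<Rightarrow> bool" where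
  "is_allocation n p A \<longleftrightarrow> (\<forall>j<n. A j \<in> bundles n p) \<and>
     (\<forall>i<p. bij_betw (\<lambda>j. A j ! i) {0..<n} {0..<n})"

end

theory Submission
  imports Defs "HOL-Library.FuncSet" "HOL-Library.List_Lexorder" "HOL-Library.Product_Lexorder"
begin

text \<open>In the profile constructed here every agent, whenever she chooses, takes the smallest
  remaining item of the category, so agent j ends up with her greedy bundle g_j, whose item in
  category i is the number of agents choosing from i before her.

  An optimistic agent ranks first the bundles outside the set A_j of bundles that agree with g_j on
  the categories she picks before her K_j-th pick and are at least g_j elsewhere, fewer categories
  above g_j meaning higher rank, and then g_j. Before her K_j-th pick some category she picks later
  loses an item in between, so some available bundle outside A_j nowhere exceeds g_j; from the
  K_j-th pick on every available bundle lies in A_j. Either way her top available bundle agrees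
  with g_j in the current category, and g_j has rank n^p + 1 - |A_j| = n^p + 1 - \<Prod> k.

  A pessimistic agent ranks g_j directly above the bundles that differ from g_j in one category,
  by a worse item, ranking them lower the later she picks from that category. For a worse item
  than g_j's, the worst available bundle deviates at the current pick, while all available bundles
  with g_j's item deviate later or not at all; so she picks g_j's item, and g_j has rank
  n^p - \<Sum>(k - 1).

  For (3), the items of the first category chosen from are shifted cyclically among the agents.
  These bundles are put on top of every preference, except that the first agent, whose
  preference is most constrained, gets hers in second place; they never affect a choice.\<close>

section \<open>Preferences given by a key\<close>

definition key_pref :: "nat \<Rightarrow> nat \<Rightarrow> (nat list \<Rightarrow> 'k::linorder) \<Rightarrow> nat list rel" where
  "key_pref n p k = {(a, b). a \<in> bundles n p \<and> b \<in> bundles n p \<and> (k a, a) \<le> (k b, b)}"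

lemma finite_bundles: "finite (bundles n p)"
proof -
  have "bundles n p \<subseteq> {xs. set xs \<subseteq> {..<n} \<and> length xs = p}"
    unfolding bundles_def by (auto simp: in_set_conv_nth)
  thus ?thesis by (rule finite_subset) (simp add: finite_lists_length_eq)
qed

lemma card_lists_nth_in:
  assumes "\<And>l. l < p \<Longrightarrow> finite (S l)"
  shows "card {b. length b = p \<and> (\<forall>l<p. b ! l \<in> S l)} = (\<Prod>l<p. card (S l))"
proof -
  let ?L = "{b. length b = p \<and> (\<forall>l<p. b ! l \<in> S l)}"
  have "bij_betw (\<lambda>b. restrict (nth b) {..<p}) ?L (PiE {..<p} S)"
  proof (rule bij_betw_byWitness[where f' = "\<lambda>g. map g [0..<p]"])
    show "\<forall>b\<in>?L. map (restrict ((!) b) {..<p}) [0..<p] = b"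
      by (auto intro: nth_equalityI)
    show "\<forall>g\<in>PiE {..<p} S. restrict ((!) (map g [0..<p])) {..<p} = g"
      by (auto simp: PiE_def extensional_def restrict_def fun_eq_iff)
    show "(\<lambda>b. restrict ((!) b) {..<p}) ` ?L \<subseteq> PiE {..<p} S"
      by (clarsimp simp: restrict_PiE_iff)
    show "(\<lambda>g. map g [0..<p]) ` PiE {..<p} S \<subseteq> ?L"
      by (auto simp: PiE_def Pi_def)
  qed
  hence "card ?L = card (PiE {..<p} S)" by (rule bij_betw_same_card)
  also have "\<dots> = (\<Prod>l<p. card (S l))" by (rule card_PiE) simp
  finally show ?thesis .
qed

lemma card_bundles: "card (bundles n p) = n ^ p"
proof -
  have "bundles n p = {b. length b = p \<and> (\<forall>l<p. b ! l \<in> {..<n})}"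
    unfolding bundles_def by auto
  thus ?thesis using card_lists_nth_in[of p "\<lambda>_. {..<n}"] by simp
qed

lemma is_pref_key_pref: "is_pref n p (key_pref n p k)"
  unfolding is_pref_def linear_order_on_def partial_order_on_def preorder_on_def
    refl_on_def trans_def antisym_def total_on_def key_pref_def
  by auto

lemma rank_key_pref:
  "b \<in> bundles n p \<Longrightarrow> rank n p (key_pref n p k) b = card {a \<in> bundles n p. (k a, a) \<le> (k b, b)}"
  unfolding rank_def key_pref_def by (intro arg_cong[where f = card]) auto

lemma rank_key_pref_pos: "b \<in> bundles n p \<Longrightarrow> 1 \<le> rank n p (key_pref n p k) b"
proof -
  assume b: "b \<in> bundles n p"
  have "finite {a \<in> bundles n p. (k a, a) \<le> (k b, b)}" using finite_bundles by simp
  moreover have "b \<in> {a \<in> bundles n p. (k a, a) \<le> (k b, b)}" using b by blast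
  ultimately have "0 < card {a \<in> bundles n p. (k a, a) \<le> (k b, b)}"
    by (subst card_gt_0_iff) blast
  thus ?thesis unfolding rank_key_pref[OF b] by simp
qed

lemma rank_key_pref_le_card:
  assumes b: "b \<in> bundles n p" and "finite S"
    and below: "\<And>a. a \<in> bundles n p \<Longrightarrow> a \<notin> S \<Longrightarrow> k b < k a"
  shows "rank n p (key_pref n p k) b \<le> card S"
proof -
  have "{a \<in> bundles n p. (k a, a) \<le> (k b, b)} \<subseteq> S"
  proof (rule subsetI, rule ccontr)
    fix a assume a: "a \<in> {a \<in> bundles n p. (k a, a) \<le> (k b, b)}" and "a \<notin> S"
    hence "(k b, b) < (k a, a)" using below[of a] by (simp add: less_prod_def)
    moreover have "(k a, a) \<le> (k b, b)" using a by blast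
    ultimately show False by (meson leD)
  qed
  thus ?thesis unfolding rank_key_pref[OF b] using \<open>finite S\<close> by (rule card_mono[rotated])
qed

lemma rank_key_pref_top:
  assumes b: "b \<in> bundles n p" and top: "\<And>a. a \<in> bundles n p \<Longrightarrow> a \<noteq> b \<Longrightarrow> k b < k a"
  shows "rank n p (key_pref n p k) b = 1"
  using rank_key_pref_le_card[OF b, of "{b}" k] rank_key_pref_pos[OF b, of k] top by fastforce

lemma rank_key_pref_le_2:
  assumes b: "b \<in> bundles n p" and below: "\<And>a. a \<in> bundles n p \<Longrightarrow> a \<noteq> x \<Longrightarrow> a \<noteq> b \<Longrightarrow> k b < k a"
  shows "rank n p (key_pref n p k) b \<le> 2"
proof -
  have "rank n p (key_pref n p k) b \<le> card {x, b}"
    using below by (intro rank_key_pref_le_card[OF b]) auto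
  also have "\<dots> \<le> 2" by (cases "x = b") auto
  finally show ?thesis .
qed

lemma rank_key_pref_unique_key:
  assumes b: "b \<in> bundles n p" and unique: "\<And>a. a \<in> bundles n p \<Longrightarrow> k a = k b \<Longrightarrow> a = b"
  shows "rank n p (key_pref n p k) b = card {a \<in> bundles n p. k a \<le> k b}"
proof -
  have "(k a, a) \<le> (k b, b) \<longleftrightarrow> k a \<le> k b" if "a \<in> bundles n p" for a
    using unique[OF that] by (cases "k a = k b") (auto simp: less_eq_prod_def)
  thus ?thesis unfolding rank_key_pref[OF b] by (metis (no_types, lifting) Collect_cong)
qed

lemma rank_le_card_bundles: "rank n p R b \<le> n ^ p"
  unfolding rank_def card_bundles[symmetric] using finite_bundles by (rule card_mono) auto

lemma ex_min_finite:
  fixes f :: "'a \<Rightarrow> 'b::linorder"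
  assumes "finite V" "V \<noteq> {}"
  shows "\<exists>m\<in>V. \<forall>b\<in>V. f m \<le> f b"
proof -
  have "Min (f ` V) \<in> f ` V" using assms by (intro Min_in) auto
  then obtain m where m: "m \<in> V" "f m = Min (f ` V)" by auto
  have "\<forall>b\<in>V. f m \<le> f b" unfolding m(2) using assms(1) by (auto intro: Min_le)
  thus ?thesis using m(1) by blast
qed

lemma ex_max_finite:
  fixes f :: "'a \<Rightarrow> 'b::linorder"
  assumes "finite V" "V \<noteq> {}"
  shows "\<exists>m\<in>V. \<forall>b\<in>V. f b \<le> f m"
proof -
  have "Max (f ` V) \<in> f ` V" using assms by (intro Max_in) auto
  then obtain m where m: "m \<in> V" "f m = Max (f ` V)" by auto
  have "\<forall>b\<in>V. f b \<le> f m" unfolding m(2) using assms(1) by (auto intro: Max_ge)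
  thus ?thesis using m(1) by blast
qed

lemma available_subset_bundles: "available n p s j \<subseteq> bundles n p"
  unfolding available_def by auto

lemma opt_choice_key_pref:
  assumes "m \<in> available n p s j" and "\<forall>b\<in>available n p s j. (k m, m) \<le> (k b, b)"
  shows "opt_choice n p (key_pref n p k) s j i = m ! i"
proof -
  let ?V = "available n p s j"
  have "(THE b. b \<in> ?V \<and> (\<forall>b'\<in>?V. (b, b') \<in> key_pref n p k)) = m"
  proof (rule the_equality)
    show "m \<in> ?V \<and> (\<forall>b'\<in>?V. (m, b') \<in> key_pref n p k)"
      using assms available_subset_bundles[of n p s j] unfolding key_pref_def by blast
    fix b assume "b \<in> ?V \<and> (\<forall>b'\<in>?V. (b, b') \<in> key_pref n p k)"
    hence "(k b, b) \<le> (k m, m)" "(k m, m) \<le> (k b, b)" using assms unfolding key_pref_def by blast+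
    hence "(k b, b) = (k m, m)" by (rule order.antisym)
    thus "b = m" by simp
  qed
  thus ?thesis unfolding opt_choice_def by simp
qed

lemma worst_key_pref:
  assumes "m \<in> available n p s j" "m ! i = d"
    and "\<forall>b\<in>available n p s j. b ! i = d \<longrightarrow> (k b, b) \<le> (k m, m)"
  shows "worst n p (key_pref n p k) s j i d = m"
  unfolding worst_def
proof (rule the_equality)
  let ?V = "available n p s j"
  show "m \<in> ?V \<and> m ! i = d \<and> (\<forall>b'\<in>?V. b' ! i = d \<longrightarrow> (b', m) \<in> key_pref n p k)"
    using assms available_subset_bundles[of n p s j] unfolding key_pref_def by blast
  fix b assume "b \<in> ?V \<and> b ! i = d \<and> (\<forall>b'\<in>?V. b' ! i = d \<longrightarrow> (b', b) \<in> key_pref n p k)"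
  hence "(k b, b) \<le> (k m, m)" "(k m, m) \<le> (k b, b)" using assms unfolding key_pref_def by blast+
  hence "(k b, b) = (k m, m)" by (rule order.antisym)
  thus "b = m" by simp
qed

lemma worst_key_pref_greatest:
  assumes "b \<in> available n p s j" "b ! i = d"
  shows "worst n p (key_pref n p k) s j i d \<in> available n p s j \<and>
    worst n p (key_pref n p k) s j i d ! i = d \<and>
    (k b, b) \<le> (k (worst n p (key_pref n p k) s j i d), worst n p (key_pref n p k) s j i d)"
proof -
  let ?V = "{b \<in> available n p s j. b ! i = d}"
  have "finite ?V"
    using finite_subset[OF available_subset_bundles finite_bundles] by simp
  then obtain m where m: "m \<in> ?V" and greatest: "\<forall>b\<in>?V. (k b, b) \<le> (k m, m)"
    using ex_max_finite[of ?V "\<lambda>b. (k b, b)"] assms by blast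
  hence "worst n p (key_pref n p k) s j i d = m" by (intro worst_key_pref) auto
  thus ?thesis using m greatest assms by auto
qed

lemma bij_betw_cyclic_pred:
  fixes n :: nat shows "bij_betw (\<lambda>x. if x = 0 then n - 1 else x - 1) {0..<n} {0..<n}"
  by (rule bij_betw_byWitness[where f' = "\<lambda>y. if y = n - 1 then 0 else y + 1"]) auto

lemma pess_choice_key_pref:
  fixes n p :: nat and s :: state and j i :: nat and k :: "nat list \<Rightarrow> 'k::linorder"
  defines "w \<equiv> worst n p (key_pref n p k) s j i"
  assumes d0: "d0 \<in> remaining n s i"
    and occurs: "\<And>d. d \<in> remaining n s i \<Longrightarrow> \<exists>b\<in>available n p s j. b ! i = d"
    and better: "\<And>d. d \<in> remaining n s i \<Longrightarrow> d \<noteq> d0 \<Longrightarrow> (k (w d0), w d0) < (k (w d), w d)"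
  shows "pess_choice n p (key_pref n p k) s j i = d0"
  unfolding pess_choice_def w_def[symmetric]
proof (rule the_equality)
  have w_bundle: "w d \<in> bundles n p" if "d \<in> remaining n s i" for d
    using occurs[OF that] worst_key_pref_greatest available_subset_bundles unfolding w_def by blast
  have "(k (w d0), w d0) \<le> (k (w d), w d)" if "d \<in> remaining n s i" for d
    using better[OF that] by (cases "d = d0") (auto intro: less_imp_le)
  thus "d0 \<in> remaining n s i \<and> (\<forall>d\<in>remaining n s i. (w d0, w d) \<in> key_pref n p k)"
    using d0 w_bundle unfolding key_pref_def by blast
  fix d assume d: "d \<in> remaining n s i \<and> (\<forall>d'\<in>remaining n s i. (w d, w d') \<in> key_pref n p k)"
  show "d = d0"
  proof (rule ccontr)
    assume "d \<noteq> d0"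
    hence "(k (w d0), w d0) < (k (w d), w d)" using d better by blast
    moreover have "(w d, w d0) \<in> key_pref n p k" using d d0 by blast
    ultimately show False unfolding key_pref_def by (auto dest: leD)
  qed
qed

section \<open>The greedy run of the mechanism\<close>

locale picking_order =
  fixes n p :: nat and Ord :: "(nat \<times> nat) list"
  assumes n_pos: "1 \<le> n" and p_pos: "1 \<le> p" and valid: "valid_order n p Ord"
begin

abbreviation "rounds \<equiv> length Ord"

lemma distinct_Ord: "distinct Ord" and set_Ord: "set Ord = {0..<n} \<times> {0..<p}"
  using valid unfolding valid_order_def by auto

lemma rounds_pos: "0 < rounds"
  using set_Ord n_pos p_pos by (intro length_pos_if_in_set[of "(0, 0)"]) auto

lemma pos_nth: "t < rounds \<Longrightarrow> pos Ord (Ord ! t) = t"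
  unfolding pos_def
  by (rule Least_equality) (use distinct_Ord nth_eq_iff_index_eq in auto)

lemma pos_in_set: "x \<in> set Ord \<Longrightarrow> pos Ord x < rounds \<and> Ord ! pos Ord x = x"
proof -
  assume "x \<in> set Ord"
  then obtain t where t: "t < rounds" "Ord ! t = x" by (auto simp: in_set_conv_nth)
  thus ?thesis using pos_nth[of t] by auto
qed

lemma nth_Ord_bounds: "t < rounds \<Longrightarrow> fst (Ord ! t) < n \<and> snd (Ord ! t) < p"
  using set_Ord nth_mem[of t Ord] by (auto simp: mem_Times_iff)

definition turn :: "nat \<Rightarrow> nat \<Rightarrow> nat" where "turn a i = pos Ord (a, i)"

lemma turn_bounds:
  "a < n \<Longrightarrow> i < p \<Longrightarrow> turn a i < rounds \<and> Ord ! turn a i = (a, i)"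
  unfolding turn_def using pos_in_set set_Ord by simp

lemma turn_inject:
  "a < n \<Longrightarrow> i < p \<Longrightarrow> b < n \<Longrightarrow> l < p \<Longrightarrow> turn a i = turn b l \<Longrightarrow> a = b \<and> i = l"
  using turn_bounds by (metis prod.inject)

lemma turn_nth: "t < rounds \<Longrightarrow> Ord ! t = (a, i) \<Longrightarrow> turn a i = t"
  unfolding turn_def using pos_nth by metis

text \<open>\<open>item j i\<close> is the item agent j gets from category i when every agent takes the
  smallest remaining item.\<close>

definition taken :: "nat \<Rightarrow> nat \<Rightarrow> nat" where
  "taken i t = card {a. a < n \<and> turn a i < t}"

definition item :: "nat \<Rightarrow> nat \<Rightarrow> nat" where "item j i = taken i (turn j i)"

lemma taken_le: "taken i t \<le> n"
  unfolding taken_def by (rule order.trans[OF card_mono[of "{..<n}"]]) auto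

lemma taken_mono: "t \<le> t' \<Longrightarrow> taken i t \<le> taken i t'"
  unfolding taken_def by (rule card_mono) auto

lemma item_less_taken: "a < n \<Longrightarrow> turn a i < t \<Longrightarrow> item a i < taken i t"
  unfolding item_def taken_def
  by (rule psubset_card_mono) auto

lemma item_image:
  "i < p \<Longrightarrow> (\<lambda>a. item a i) ` {a. a < n \<and> turn a i < t} = {..<taken i t}"
  and inj_on_item: "i < p \<Longrightarrow> inj_on (\<lambda>a. item a i) {a. a < n \<and> turn a i < t}"
proof -
  assume i: "i < p"
  show inj: "inj_on (\<lambda>a. item a i) {a. a < n \<and> turn a i < t}"
  proof (rule inj_onI)
    fix a b assume a: "a \<in> {a. a < n \<and> turn a i < t}" and b: "b \<in> {a. a < n \<and> turn a i < t}"
      and e: "item a i = item b i"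
    show "a = b"
    proof (rule ccontr)
      assume "a \<noteq> b"
      then have "turn a i \<noteq> turn b i" using turn_inject a b i by auto
      then have "turn a i < turn b i \<or> turn b i < turn a i" by auto
      then show False
        using item_less_taken[of a i "turn b i"] item_less_taken[of b i "turn a i"] a b e
        unfolding item_def[of b] item_def[of a] by auto
    qed
  qed
  have sub: "(\<lambda>a. item a i) ` {a. a < n \<and> turn a i < t} \<subseteq> {..<taken i t}"
    using item_less_taken by auto
  have "card ((\<lambda>a. item a i) ` {a. a < n \<and> turn a i < t}) = taken i t"
    using card_image[OF inj] unfolding taken_def by simp
  then show "(\<lambda>a. item a i) ` {a. a < n \<and> turn a i < t} = {..<taken i t}"
    using sub by (intro card_subset_eq) auto
qed

lemma item_less: "j < n \<Longrightarrow> item j i < n"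
  using item_less_taken[of j i "Suc (turn j i)"] taken_le[of i "Suc (turn j i)"] by auto

lemma taken_all: "i < p \<Longrightarrow> taken i rounds = n"
proof -
  assume i: "i < p"
  have "{a. a < n \<and> turn a i < rounds} = {..<n}" using turn_bounds i by auto
  thus ?thesis unfolding taken_def by simp
qed

lemma bij_item: "i < p \<Longrightarrow> bij_betw (\<lambda>a. item a i) {0..<n} {0..<n}"
proof -
  assume i: "i < p"
  have e: "{a. a < n \<and> turn a i < rounds} = {0..<n}" using turn_bounds i by auto
  show ?thesis
    unfolding bij_betw_def
    using item_image[OF i, of rounds] inj_on_item[OF i, of rounds] taken_all[OF i] e
    by (auto simp: lessThan_atLeast0)
qed

lemma taken_const:
  assumes "t \<le> t'" and "\<And>s. t \<le> s \<Longrightarrow> s < t' \<Longrightarrow> snd (Ord ! s) \<noteq> l" and "l < p"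
  shows "taken l t = taken l t'"
proof -
  have "{a. a < n \<and> turn a l < t} = {a. a < n \<and> turn a l < t'}"
  proof (intro Collect_cong iffI)
    fix a assume "a < n \<and> turn a l < t'"
    moreover have "a < n \<Longrightarrow> snd (Ord ! turn a l) = l" using turn_bounds assms(3) by auto
    ultimately show "a < n \<and> turn a l < t" using assms(2)[of "turn a l"] by (meson not_le)
  qed (use assms(1) in auto)
  thus ?thesis unfolding taken_def by simp
qed

lemma taken_less_Suc:
  assumes "s < rounds" "snd (Ord ! s) = l" shows "taken l s < taken l (Suc s)"
proof -
  obtain a where a: "Ord ! s = (a, l)" using assms by (cases "Ord ! s") auto
  have al: "a < n" "l < p" using nth_Ord_bounds[OF assms(1)] a by auto
  have "turn a l = s" using turn_nth[OF assms(1) a] .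
  thus ?thesis unfolding taken_def using al by (intro psubset_card_mono) auto
qed

lemma kk_eq_item:
  assumes "j < n" "i < p" shows "kk n Ord j i = n - item j i"
proof -
  have "{a. \<exists>t<pos Ord (j, i). Ord ! t = (a, i)} = {a. a < n \<and> turn a i < turn j i}"
  proof (intro Collect_cong iffI)
    fix a assume "\<exists>t<pos Ord (j, i). Ord ! t = (a, i)"
    then obtain t where t: "t < turn j i" "Ord ! t = (a, i)" unfolding turn_def by auto
    have tN: "t < rounds" using t turn_bounds assms by (meson less_trans)
    show "a < n \<and> turn a i < turn j i"
      using nth_Ord_bounds[OF tN] t turn_nth[OF tN t(2)] by auto
  next
    fix a assume "a < n \<and> turn a i < turn j i"
    thus "\<exists>t<pos Ord (j, i). Ord ! t = (a, i)"
      using turn_bounds assms unfolding turn_def by auto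
  qed
  thus ?thesis unfolding kk_def item_def taken_def turn_def by simp
qed

definition greedy_state :: "nat \<Rightarrow> state" where
  "greedy_state t =
     (\<lambda>a l. if a < n \<and> l < p \<and> turn a l < t then Some (item a l) else None)"

definition greedy_bundle :: "nat \<Rightarrow> nat list" where
  "greedy_bundle j = map (item j) [0..<p]"

lemma greedy_bundle_in_bundles: "j < n \<Longrightarrow> greedy_bundle j \<in> bundles n p"
  unfolding greedy_bundle_def bundles_def using item_less by auto

lemma nth_greedy_bundle[simp]: "l < p \<Longrightarrow> greedy_bundle j ! l = item j l"
  unfolding greedy_bundle_def by simp

lemma length_greedy_bundle[simp]: "length (greedy_bundle j) = p" unfolding greedy_bundle_def by simp

lemma remaining_greedy_state:
  "i < p \<Longrightarrow> remaining n (greedy_state t) i = {d. taken i t \<le> d \<and> d < n}"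
proof -
  assume i: "i < p"
  have "(\<exists>a. greedy_state t a i = Some d) \<longleftrightarrow> d < taken i t" for d
  proof -
    have "(\<exists>a. greedy_state t a i = Some d) \<longleftrightarrow>
        d \<in> (\<lambda>a. item a i) ` {a. a < n \<and> turn a i < t}"
      unfolding greedy_state_def using i by (auto split: if_splits)
    thus ?thesis using item_image[OF i] by auto
  qed
  thus ?thesis unfolding remaining_def by auto
qed

definition greedy_avail :: "nat \<Rightarrow> nat \<Rightarrow> nat list set" where
  "greedy_avail j t = {b \<in> bundles n p. \<forall>l<p.
     if turn j l < t then b ! l = item j l else taken l t \<le> b ! l}"

lemma greedy_avail_subset: "greedy_avail j t \<subseteq> bundles n p"
  unfolding greedy_avail_def by auto

lemma available_greedy_state:
  "j < n \<Longrightarrow> available n p (greedy_state t) j = greedy_avail j t"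
proof -
  assume j: "j < n"
  show ?thesis
    unfolding available_def greedy_avail_def
  proof (intro Collect_cong conj_cong refl)
    fix b assume b: "b \<in> bundles n p"
    show "(\<forall>l<p. case greedy_state t j l of
            None \<Rightarrow> b ! l \<in> remaining n (greedy_state t) l | Some d \<Rightarrow> b ! l = d) =
        (\<forall>l<p. if turn j l < t then b ! l = item j l else taken l t \<le> b ! l)"
      using b j remaining_greedy_state unfolding greedy_state_def bundles_def by auto
  qed
qed

lemma greedy_bundle_avail: "j < n \<Longrightarrow> greedy_bundle j \<in> greedy_avail j t"
  unfolding greedy_avail_def using greedy_bundle_in_bundles
  by (auto simp: item_def intro: taken_mono)

lemma greedy_avail_own_ge:
  "j < n \<Longrightarrow> i < p \<Longrightarrow> b \<in> greedy_avail j (turn j i) \<Longrightarrow> item j i \<le> b ! i"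
  unfolding greedy_avail_def item_def by auto

lemma greedy_state_Suc:
  assumes t: "t < rounds" and o: "Ord ! t = (j, i)"
  shows "greedy_state (Suc t) = (greedy_state t)(j := (greedy_state t j)(i := Some (item j i)))"
proof -
  have ji: "j < n" "i < p" using nth_Ord_bounds[OF t] o by auto
  have pj: "turn j i = t" using turn_nth[OF t o] .
  show ?thesis
  proof (intro ext)
    fix a l
    show "greedy_state (Suc t) a l =
      ((greedy_state t)(j := (greedy_state t j)(i := Some (item j i)))) a l"
    proof (cases "a = j \<and> l = i")
      case True thus ?thesis using ji pj unfolding greedy_state_def by auto
    next
      case False
      have "a < n \<Longrightarrow> l < p \<Longrightarrow> turn a l \<noteq> t" using turn_inject[of a l j i] ji pj False by auto
      thus ?thesis using False unfolding greedy_state_def by (auto simp: less_Suc_eq)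
    qed
  qed
qed

lemma csam_eq_greedy_bundle:
  assumes ch: "\<And>t j i. t < rounds \<Longrightarrow> Ord ! t = (j, i) \<Longrightarrow>
      (if optim j then opt_choice n p (P j) (greedy_state t) j i
       else pess_choice n p (P j) (greedy_state t) j i) = item j i"
  shows "j < n \<Longrightarrow> csam n p Ord optim P j = greedy_bundle j"
proof -
  have fo: "t \<le> rounds \<Longrightarrow> fold (step n p optim P) (take t Ord) (\<lambda>_ _. None) = greedy_state t" for t
  proof (induction t)
    case 0 thus ?case unfolding greedy_state_def by auto
  next
    case (Suc t)
    then have t: "t < rounds" by simp
    obtain j i where o: "Ord ! t = (j, i)" by (cases "Ord ! t") auto
    have "take (Suc t) Ord = take t Ord @ [Ord ! t]" using t by (simp add: take_Suc_conv_app_nth)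
    then have "fold (step n p optim P) (take (Suc t) Ord) (\<lambda>_ _. None) =
        step n p optim P (j, i) (greedy_state t)"
      using Suc o by simp
    also have "\<dots> = greedy_state (Suc t)"
      unfolding step_def using ch[OF t o] greedy_state_Suc[OF t o] by simp
    finally show ?case .
  qed
  assume j: "j < n"
  have "csam_state n p Ord optim P = greedy_state rounds"
    unfolding csam_state_def using fo[of rounds] by simp
  thus ?thesis unfolding csam_def greedy_bundle_def greedy_state_def using j turn_bounds by auto
qed

section \<open>The order of an agent's picks and K_j\<close>

definition picks :: "nat \<Rightarrow> (nat \<times> nat) list" where
  "picks j = filter (\<lambda>x. fst x = j) Ord"

lemma set_picks: "j < n \<Longrightarrow> set (picks j) = {j} \<times> {0..<p}"
  unfolding picks_def using set_Ord by auto

lemma length_picks: "j < n \<Longrightarrow> length (picks j) = p"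
proof -
  assume j: "j < n"
  have "length (picks j) = card (set (picks j))"
    using distinct_Ord unfolding picks_def by (metis distinct_card distinct_filter)
  thus ?thesis using set_picks[OF j] by (simp add: card_cartesian_product)
qed

lemma map_pos_picks: "map (pos Ord) (picks j) = filter (\<lambda>t. fst (Ord ! t) = j) [0..<rounds]"
proof -
  have "picks j = map (nth Ord) (filter ((\<lambda>x. fst x = j) \<circ> nth Ord) [0..<rounds])"
    unfolding picks_def by (metis filter_map map_nth)
  hence "map (pos Ord) (picks j) =
      map (pos Ord \<circ> nth Ord) (filter ((\<lambda>x. fst x = j) \<circ> nth Ord) [0..<rounds])"
    by simp
  also have "\<dots> = filter ((\<lambda>x. fst x = j) \<circ> nth Ord) [0..<rounds]"
    by (rule map_idI) (auto simp: pos_nth)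
  finally show ?thesis by (simp add: comp_def)
qed

lemma sorted_pos_picks: "sorted_wrt (<) (map (pos Ord) (picks j))"
  unfolding map_pos_picks by (rule sorted_wrt_filter) simp

lemma nth_picks: "j < n \<Longrightarrow> k < p \<Longrightarrow> picks j ! k = (j, Oj Ord j (Suc k))"
proof -
  assume j: "j < n" and k: "k < p"
  have "picks j ! k \<in> set (picks j)" using k length_picks[OF j] by simp
  hence "fst (picks j ! k) = j" using set_picks[OF j] by auto
  moreover have "Oj Ord j (Suc k) = snd (picks j ! k)"
    unfolding Oj_def picks_def[symmetric] using k length_picks[OF j] by simp
  ultimately show ?thesis by (metis prod.collapse)
qed

lemma Oj_less: "j < n \<Longrightarrow> 1 \<le> l \<Longrightarrow> l \<le> p \<Longrightarrow> Oj Ord j l < p"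
proof -
  assume j: "j < n" and l: "1 \<le> l" "l \<le> p"
  have "picks j ! (l - 1) \<in> set (picks j)" using l length_picks[OF j] by simp
  thus ?thesis using nth_picks[OF j, of "l - 1"] set_picks[OF j] l by auto
qed

lemma turn_Oj:
  "j < n \<Longrightarrow> 1 \<le> l \<Longrightarrow> l \<le> p \<Longrightarrow> turn j (Oj Ord j l) = map (pos Ord) (picks j) ! (l - 1)"
proof -
  assume j: "j < n" and l: "1 \<le> l" "l \<le> p"
  have "map (pos Ord) (picks j) ! (l - 1) = pos Ord (picks j ! (l - 1))"
    using l length_picks[OF j] by simp
  also have "\<dots> = turn j (Oj Ord j l)"
    using nth_picks[OF j, of "l - 1"] l unfolding turn_def by simp
  finally show ?thesis by simp
qed

lemma turn_Oj_less:
  "j < n \<Longrightarrow> 1 \<le> l \<Longrightarrow> l < l' \<Longrightarrow> l' \<le> p \<Longrightarrow> turn j (Oj Ord j l) < turn j (Oj Ord j l')"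
  using turn_Oj sorted_wrt_nth_less[OF sorted_pos_picks] length_picks by (simp add: turn_Oj)

lemma turn_Oj_less_iff:
  "j < n \<Longrightarrow> 1 \<le> l \<Longrightarrow> l \<le> p \<Longrightarrow> 1 \<le> l' \<Longrightarrow> l' \<le> p \<Longrightarrow>
   turn j (Oj Ord j l) < turn j (Oj Ord j l') \<longleftrightarrow> l < l'"
  using turn_Oj_less by (metis less_asym linorder_neqE_nat)

lemma Oj_bij: "j < n \<Longrightarrow> bij_betw (Oj Ord j) {1..p} {0..<p}"
proof -
  assume j: "j < n"
  have inj: "inj_on (Oj Ord j) {1..p}"
  proof (rule inj_onI)
    fix l l' assume "l \<in> {1..p}" "l' \<in> {1..p}" "Oj Ord j l = Oj Ord j l'"
    thus "l = l'"
      using turn_Oj_less[OF j, of l l'] turn_Oj_less[OF j, of l' l]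
      by (metis atLeastAtMost_iff less_irrefl linorder_neqE_nat)
  qed
  have sub: "Oj Ord j ` {1..p} \<subseteq> {0..<p}" using Oj_less[OF j] by auto
  have "card (Oj Ord j ` {1..p}) = p" using card_image[OF inj] by simp
  hence "Oj Ord j ` {1..p} = {0..<p}" using sub by (intro card_subset_eq) auto
  thus ?thesis using inj unfolding bij_betw_def by simp
qed

lemma Oj_surj: "j < n \<Longrightarrow> i < p \<Longrightarrow> \<exists>l. 1 \<le> l \<and> l \<le> p \<and> Oj Ord j l = i"
  using Oj_bij unfolding bij_betw_def by (metis atLeastAtMost_iff atLeastLessThan_iff imageE le0)

definition turn_K :: "nat \<Rightarrow> nat" where
  "turn_K j = turn j (Oj Ord j (Kj p Ord j))"

abbreviation K_cond :: "nat \<Rightarrow> nat \<Rightarrow> bool" where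
  "K_cond j K \<equiv> 1 \<le> K \<and> K \<le> p \<and> (\<forall>l. K < l \<and> l \<le> p \<longrightarrow>
     \<not> (\<exists>t. pos Ord (j, Oj Ord j K) < t \<and> t < pos Ord (j, Oj Ord j l) \<and>
          snd (Ord ! t) = Oj Ord j l))"

lemma K_cond_Kj: "K_cond j (Kj p Ord j)"
  unfolding Kj_def by (rule LeastI[of _ p]) (use p_pos in auto)

lemma not_K_cond_less_Kj: "K < Kj p Ord j \<Longrightarrow> \<not> K_cond j K"
  unfolding Kj_def by (rule not_less_Least)

lemma Kj_bounds: "1 \<le> Kj p Ord j \<and> Kj p Ord j \<le> p" using K_cond_Kj by blast

lemma no_pick_after_turn_K:
  assumes j: "j < n" and l: "l < p" and t: "turn_K j < t" "t < turn j l"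
  shows "snd (Ord ! t) \<noteq> l"
proof -
  obtain l' where l': "1 \<le> l'" "l' \<le> p" "Oj Ord j l' = l" using Oj_surj[OF j l] by blast
  have "Kj p Ord j < l'"
    using turn_Oj_less_iff[OF j, of "Kj p Ord j" l'] t l' Kj_bounds unfolding turn_K_def by auto
  then have "\<not> (\<exists>t. pos Ord (j, Oj Ord j (Kj p Ord j)) < t \<and> t < pos Ord (j, Oj Ord j l') \<and>
      snd (Ord ! t) = Oj Ord j l')"
    using K_cond_Kj[of j] l'(2) by simp
  thus ?thesis using l'(3) t unfolding turn_K_def turn_def by auto
qed

lemma pick_before_turn_K:
  assumes j: "j < n" and l0: "l0 < p" and lt: "turn j l0 < turn_K j"
  shows "\<exists>l<p. turn j l0 < turn j l \<and> (\<exists>t. turn j l0 < t \<and> t < turn j l \<and> snd (Ord ! t) = l)"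
proof -
  obtain k where k: "1 \<le> k" "k \<le> p" "Oj Ord j k = l0" using Oj_surj[OF j l0] by blast
  have kK: "k < Kj p Ord j"
    using turn_Oj_less_iff[OF j, of k "Kj p Ord j"] lt k Kj_bounds unfolding turn_K_def by auto
  hence "\<not> K_cond j k" by (rule not_K_cond_less_Kj)
  then have "\<not> (\<forall>l. k < l \<and> l \<le> p \<longrightarrow>
      \<not> (\<exists>t. pos Ord (j, Oj Ord j k) < t \<and> t < pos Ord (j, Oj Ord j l) \<and>
          snd (Ord ! t) = Oj Ord j l))"
    using k kK Kj_bounds[of j] by simp
  then obtain l where l: "k < l" "l \<le> p" and
    ex: "\<exists>t. pos Ord (j, Oj Ord j k) < t \<and> t < pos Ord (j, Oj Ord j l) \<and>
      snd (Ord ! t) = Oj Ord j l"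
    by blast
  have "Oj Ord j l < p" using Oj_less[OF j] l k by auto
  moreover have "turn j l0 < turn j (Oj Ord j l)" using turn_Oj_less[OF j, of k l] k l by auto
  ultimately show ?thesis using ex k unfolding turn_def by blast
qed

lemma Oj_Kj_less: "j < n \<Longrightarrow> Oj Ord j (Kj p Ord j) < p" using Oj_less Kj_bounds by blast

section \<open>Optimistic agents\<close>

lemma taken_eq_item_after_turn_K:
  assumes j: "j < n" and l: "l < p" and "turn_K j \<le> t" "t \<le> turn j l"
  shows "taken l t = item j l"
  unfolding item_def
proof (rule taken_const)
  fix s assume s: "t \<le> s" "s < turn j l"
  show "snd (Ord ! s) \<noteq> l"
  proof (cases "s = turn_K j")
    case True
    have "Ord ! turn_K j = (j, Oj Ord j (Kj p Ord j))"
      using turn_bounds[OF j Oj_Kj_less[OF j]] unfolding turn_K_def by simp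
    moreover have "Oj Ord j (Kj p Ord j) \<noteq> l" using True s unfolding turn_K_def by auto
    ultimately show ?thesis using True by simp
  next
    case False
    thus ?thesis using no_pick_after_turn_K[OF j l] s assms(3) by simp
  qed
qed (use assms in auto)

definition opt_set :: "nat \<Rightarrow> nat list set" where
  "opt_set j = {b \<in> bundles n p. \<forall>l<p.
     if turn j l < turn_K j then b ! l = item j l else item j l \<le> b ! l}"

definition excess :: "nat \<Rightarrow> nat list \<Rightarrow> nat" where
  "excess j b = card {l. l < p \<and> item j l < b ! l}"

text \<open>The bundles t1, t2 (placed on top) and sc (placed right below the greedy bundle) serve part (3);
  passing the non-bundle [] disables them.\<close>

definition opt_key :: "nat \<Rightarrow> nat list \<Rightarrow> nat list \<Rightarrow> nat list \<Rightarrow> nat list \<Rightarrow> nat" where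
  "opt_key j t1 t2 sc b =
     (if b = t1 then 0 else if b = t2 then 1 else if b \<notin> opt_set j then 2 + excess j b
      else if b = greedy_bundle j then p + 3 else if b = sc then p + 4 else p + 5)"

lemma opt_set_subset: "opt_set j \<subseteq> bundles n p"
  unfolding opt_set_def by auto

lemma greedy_bundle_opt_set: "j < n \<Longrightarrow> greedy_bundle j \<in> opt_set j"
  unfolding opt_set_def using greedy_bundle_in_bundles by auto

lemma excess_le: "excess j b \<le> p"
  unfolding excess_def by (rule order.trans[OF card_mono[of "{..<p}"]]) auto

lemma excess_eq_0_le: "excess j b = 0 \<Longrightarrow> l < p \<Longrightarrow> b ! l \<le> item j l"
  unfolding excess_def by (auto simp: not_less[symmetric])

lemma greedy_avail_subset_opt_set:
  assumes j: "j < n" and "turn_K j \<le> t"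
  shows "greedy_avail j t \<subseteq> opt_set j"
proof
  fix b assume b: "b \<in> greedy_avail j t"
  have "if turn j l < turn_K j then b ! l = item j l else item j l \<le> b ! l" if l: "l < p" for l
  proof (cases "turn j l < t")
    case True thus ?thesis using b l unfolding greedy_avail_def by auto
  next
    case False
    hence "taken l t \<le> b ! l" using b l unfolding greedy_avail_def by auto
    thus ?thesis using taken_eq_item_after_turn_K[OF j l assms(2)] False assms(2) by auto
  qed
  thus "b \<in> opt_set j" using b greedy_avail_subset unfolding opt_set_def by auto
qed

lemma taken_less_item_before_turn_K:
  assumes j: "j < n" and i: "i < p" and before: "turn j i < turn_K j"
  shows "\<exists>l<p. turn j i < turn j l \<and> taken l (turn j i) < item j l"
proof -
  let ?t = "turn j i"
  obtain l where l: "l < p" "?t < turn j l" and "\<exists>s. ?t < s \<and> s < turn j l \<and> snd (Ord ! s) = l"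
    using pick_before_turn_K[OF j i before] by blast
  then obtain s where s: "?t < s" "s < turn j l" "snd (Ord ! s) = l" by blast
  have s_round: "s < rounds" using s turn_bounds[OF j l(1)] by auto
  have "taken l ?t \<le> taken l s" using s by (intro taken_mono) auto
  also have "\<dots> < taken l (Suc s)" using taken_less_Suc[OF s_round s(3)] .
  also have "\<dots> \<le> item j l" unfolding item_def using s by (intro taken_mono) auto
  finally show ?thesis using l by blast
qed

lemma ex_greedy_avail_excess_0:
  assumes j: "j < n" and i: "i < p" and before: "turn j i < turn_K j"
  shows "\<exists>b\<in>greedy_avail j (turn j i). b \<notin> opt_set j \<and> excess j b = 0"
proof -
  let ?t = "turn j i"
  obtain l where l: "l < p" "?t < turn j l" and taken_less: "taken l ?t < item j l"
    using taken_less_item_before_turn_K[OF j i before] by blast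
  define b where "b = (greedy_bundle j)[l := taken l ?t]"
  have b_nth: "l' < p \<Longrightarrow> b ! l' = (if l' = l then taken l ?t else item j l')" for l'
    unfolding b_def using l by auto
  have "b \<in> bundles n p"
    unfolding bundles_def b_def using item_less[OF j] taken_less l(1)
    by (auto simp: nth_list_update intro: less_trans)
  moreover have "taken l' ?t \<le> b ! l'" if "l' < p" "\<not> turn j l' < ?t" for l'
    using b_nth[OF that(1)] that l unfolding item_def by (auto intro: taken_mono)
  ultimately have "b \<in> greedy_avail j ?t"
    unfolding greedy_avail_def using b_nth l by auto
  moreover have "b \<notin> opt_set j"
    using b_nth[OF l(1)] taken_less l(1) unfolding opt_set_def by (auto split: if_splits)
  moreover have "excess j b = 0"
    unfolding excess_def using b_nth taken_less by (auto simp: not_less[symmetric])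
  ultimately show ?thesis by blast
qed

text \<open>Conditions under which t1 and t2 can be put on top of j's optimistic preference without
  changing her choices.\<close>

definition opt_tops :: "nat \<Rightarrow> nat list \<Rightarrow> nat list \<Rightarrow> bool" where
  "opt_tops j t1 t2 \<longleftrightarrow> t1 \<notin> opt_set j \<and> t2 \<notin> opt_set j \<and>
     (\<forall>i<p. (t1 \<in> greedy_avail j (turn j i) \<longrightarrow> t1 ! i = item j i) \<and>
       (t2 \<in> greedy_avail j (turn j i) \<longrightarrow> t2 \<noteq> t1 \<longrightarrow>
          t2 ! i = item j i \<or> t1 \<in> greedy_avail j (turn j i)))"

lemma opt_key_greedy_bundle:
  assumes "j < n" "opt_tops j t1 t2"
  shows "opt_key j t1 t2 sc a = p + 3 \<longleftrightarrow> a = greedy_bundle j"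
    and "opt_key j t1 t2 sc a \<le> p + 3 \<longleftrightarrow> a = greedy_bundle j \<or> a \<notin> opt_set j"
  using assms greedy_bundle_opt_set[OF assms(1)] excess_le[of j a]
  unfolding opt_key_def opt_tops_def by auto

lemma opt_key_le_2:
  "b \<notin> opt_set j \<Longrightarrow> excess j b = 0 \<Longrightarrow> opt_key j t1 t2 sc b \<le> 2"
  "opt_key j t1 t2 sc b \<le> 2 \<Longrightarrow> b = t1 \<or> b = t2 \<or> b \<notin> opt_set j \<and> excess j b = 0"
  unfolding opt_key_def by (auto split: if_splits)

lemma opt_key_least_after_turn_K:
  assumes j: "j < n" and tops: "opt_tops j t1 t2" and after: "turn_K j \<le> t"
    and m: "m \<in> greedy_avail j t"
    and least: "\<And>b. b \<in> greedy_avail j t \<Longrightarrow> opt_key j t1 t2 sc m \<le> opt_key j t1 t2 sc b"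
  shows "m = greedy_bundle j"
proof -
  have "opt_key j t1 t2 sc (greedy_bundle j) = p + 3"
    using opt_key_greedy_bundle(1)[OF j tops] by simp
  hence "opt_key j t1 t2 sc m \<le> p + 3" using least[OF greedy_bundle_avail[OF j]] by simp
  thus ?thesis
    using opt_key_greedy_bundle(2)[OF j tops] greedy_avail_subset_opt_set[OF j after] m by blast
qed

lemma opt_key_least_before_turn_K:
  assumes j: "j < n" and i: "i < p" and tops: "opt_tops j t1 t2"
    and before: "turn j i < turn_K j" and m: "m \<in> greedy_avail j (turn j i)"
    and least: "\<And>b. b \<in> greedy_avail j (turn j i) \<Longrightarrow> opt_key j t1 t2 sc m \<le> opt_key j t1 t2 sc b"
  shows "m ! i = item j i"
proof -
  let ?V = "greedy_avail j (turn j i)"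
  have t1_avail: "t1 \<in> ?V \<Longrightarrow> t1 ! i = item j i"
    and t2_avail: "t2 \<in> ?V \<Longrightarrow> t2 \<noteq> t1 \<Longrightarrow> t2 ! i = item j i \<or> t1 \<in> ?V"
    using tops i unfolding opt_tops_def by auto
  obtain b where b: "b \<in> ?V" "b \<notin> opt_set j" "excess j b = 0"
    using ex_greedy_avail_excess_0[OF j i before] by auto
  have "opt_key j t1 t2 sc m \<le> 2"
    using least[OF b(1)] opt_key_le_2(1)[OF b(2,3), of t1 t2 sc] by simp
  then consider "m = t1" | "m = t2" "m \<noteq> t1" | "excess j m = 0"
    using opt_key_le_2(2) by metis
  thus ?thesis
  proof cases
    case 1
    thus ?thesis using t1_avail m by simp
  next
    case 2
    have "t1 \<notin> ?V"
    proof
      assume "t1 \<in> ?V"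
      hence "opt_key j t1 t2 sc m \<le> opt_key j t1 t2 sc t1" by (rule least)
      thus False using 2 unfolding opt_key_def by simp
    qed
    thus ?thesis using t2_avail 2 m by auto
  next
    case 3
    thus ?thesis
      using excess_eq_0_le[OF _ i] greedy_avail_own_ge[OF j i m] by (simp add: le_antisym)
  qed
qed

lemma opt_choice_greedy:
  assumes j: "j < n" and i: "i < p" and tops: "opt_tops j t1 t2"
  shows "opt_choice n p (key_pref n p (opt_key j t1 t2 sc)) (greedy_state (turn j i)) j i =
    item j i"
proof -
  let ?k = "opt_key j t1 t2 sc" and ?V = "greedy_avail j (turn j i)"
  have "finite ?V" using greedy_avail_subset finite_bundles by (rule finite_subset)
  then obtain m where m: "m \<in> ?V" and least: "\<forall>b\<in>?V. (?k m, m) \<le> (?k b, b)"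
    using ex_min_finite[of ?V "\<lambda>b. (?k b, b)"] greedy_bundle_avail[OF j] by blast
  have key_least: "?k m \<le> ?k b" if "b \<in> ?V" for b
    using least that by (auto simp: less_eq_prod_def)
  have "opt_choice n p (key_pref n p ?k) (greedy_state (turn j i)) j i = m ! i"
    by (rule opt_choice_key_pref) (use m least in \<open>simp_all only: available_greedy_state[OF j]\<close>)
  moreover have "m ! i = item j i"
  proof (cases "turn_K j \<le> turn j i")
    case True
    thus ?thesis using opt_key_least_after_turn_K[OF j tops True m key_least] i by simp
  next
    case False
    thus ?thesis using opt_key_least_before_turn_K[OF j i tops _ m key_least] by simp
  qed
  ultimately show ?thesis by simp
qed

lemma cats_from_turn_K:
  assumes j: "j < n"
  shows "{l\<in>{..<p}. \<not> turn j l < turn_K j} = Oj Ord j ` {Kj p Ord j..p}"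
proof
  show "{l\<in>{..<p}. \<not> turn j l < turn_K j} \<subseteq> Oj Ord j ` {Kj p Ord j..p}"
  proof
    fix i assume i: "i \<in> {l\<in>{..<p}. \<not> turn j l < turn_K j}"
    obtain l where l: "1 \<le> l" "l \<le> p" "Oj Ord j l = i" using Oj_surj[OF j, of i] i by auto
    have "\<not> l < Kj p Ord j"
      using turn_Oj_less[OF j, of l "Kj p Ord j"] l i Kj_bounds unfolding turn_K_def by auto
    thus "i \<in> Oj Ord j ` {Kj p Ord j..p}" using l by auto
  qed
  show "Oj Ord j ` {Kj p Ord j..p} \<subseteq> {l\<in>{..<p}. \<not> turn j l < turn_K j}"
  proof
    fix i assume "i \<in> Oj Ord j ` {Kj p Ord j..p}"
    then obtain l where l: "Kj p Ord j \<le> l" "l \<le> p" "i = Oj Ord j l" by auto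
    have "i < p" using Oj_less[OF j, of l] l Kj_bounds[of j] by auto
    moreover have "\<not> turn j i < turn_K j"
      using turn_Oj_less[OF j, of "Kj p Ord j" l] l Kj_bounds[of j] unfolding turn_K_def
      by (cases "l = Kj p Ord j") auto
    ultimately show "i \<in> {l\<in>{..<p}. \<not> turn j l < turn_K j}" by simp
  qed
qed

lemma card_opt_set:
  assumes j: "j < n"
  shows "card (opt_set j) = (\<Prod>l\<in>{Kj p Ord j..p}. kk n Ord j (Oj Ord j l))"
proof -
  define S where "S l = (if turn j l < turn_K j then {item j l} else {item j l..<n})" for l
  have "opt_set j = {b. length b = p \<and> (\<forall>l<p. b ! l \<in> S l)}"
    unfolding opt_set_def bundles_def S_def using item_less[OF j] by (auto split: if_splits)
  hence "card (opt_set j) = (\<Prod>l<p. card (S l))"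
    using card_lists_nth_in[of p S] unfolding S_def by simp
  also have "\<dots> = (\<Prod>l<p. if \<not> turn j l < turn_K j then n - item j l else 1)"
    unfolding S_def by (intro prod.cong) auto
  also have "\<dots> = (\<Prod>l\<in>{l\<in>{..<p}. \<not> turn j l < turn_K j}. n - item j l)"
    by (rule prod.inter_filter[symmetric]) simp
  also have "\<dots> = (\<Prod>l\<in>{Kj p Ord j..p}. n - item j (Oj Ord j l))"
    unfolding cats_from_turn_K[OF j]
  proof (rule prod.reindex[unfolded comp_def])
    show "inj_on (Oj Ord j) {Kj p Ord j..p}"
      using Oj_bij[OF j] Kj_bounds[of j] unfolding bij_betw_def by (auto intro: inj_on_subset)
  qed
  also have "\<dots> = (\<Prod>l\<in>{Kj p Ord j..p}. kk n Ord j (Oj Ord j l))"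
    using kk_eq_item[OF j] Oj_less[OF j] Kj_bounds[of j] by (intro prod.cong) auto
  finally show ?thesis .
qed

lemma rank_opt_key:
  assumes j: "j < n" and tops: "opt_tops j t1 t2"
  shows "int (rank n p (key_pref n p (opt_key j t1 t2 sc)) (greedy_bundle j)) =
     int n ^ p + 1 - (\<Prod>l\<in>{Kj p Ord j..p}. int (kk n Ord j (Oj Ord j l)))"
proof -
  let ?k = "opt_key j t1 t2 sc" and ?g = "greedy_bundle j"
  have g: "?g \<in> bundles n p" "?g \<in> opt_set j"
    using greedy_bundle_in_bundles[OF j] greedy_bundle_opt_set[OF j] .
  note key = opt_key_greedy_bundle[OF j tops, of sc]
  have key_g: "?k ?g = p + 3" using key(1) by blast
  have "{a \<in> bundles n p. ?k a \<le> ?k ?g} = insert ?g (bundles n p - opt_set j)"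
    unfolding key_g key(2) using g by auto
  moreover have "?k a = ?k ?g \<Longrightarrow> a = ?g" for a
    unfolding key_g key(1) .
  ultimately have "rank n p (key_pref n p ?k) ?g = card (insert ?g (bundles n p - opt_set j))"
    using rank_key_pref_unique_key[OF g(1), of ?k] by simp
  also have "\<dots> = n ^ p - card (opt_set j) + 1"
    using g(2) finite_bundles opt_set_subset card_bundles
    by (simp add: card_Diff_subset finite_subset[OF opt_set_subset])
  finally show ?thesis
    using card_mono[OF finite_bundles opt_set_subset, of j] card_bundles card_opt_set[OF j]
    by (simp add: of_nat_diff)
qed

section \<open>Pessimistic agents\<close>

definition dev_family :: "nat \<Rightarrow> (nat \<Rightarrow> nat \<Rightarrow> nat list) \<Rightarrow> bool" where
  "dev_family j W \<longleftrightarrow> (\<forall>l d. l < p \<longrightarrow> item j l < d \<longrightarrow> d < n \<longrightarrow>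
     W l d \<in> bundles n p \<and> W l d ! l = d \<and>
     (\<forall>l'<p. turn j l' < turn j l \<longrightarrow> W l d ! l' = item j l') \<and>
     (\<forall>l'<p. turn j l < turn j l' \<longrightarrow> taken l' (turn j l) \<le> W l d ! l'))"

definition dev_set :: "nat \<Rightarrow> (nat \<Rightarrow> nat \<Rightarrow> nat list) \<Rightarrow> nat list set" where
  "dev_set j W = (\<lambda>(l, d). W l d) ` (SIGMA l:{..<p}. {item j l<..<n})"

definition first_dev :: "nat \<Rightarrow> nat list \<Rightarrow> nat" where
  "first_dev j b = Min {turn j l | l. l < p \<and> b ! l \<noteq> item j l}"

text \<open>The bundle tau (put on top) and sc (put first among the deviations of its turn) serve part (3).\<close>

definition pess_key :: "nat \<Rightarrow> nat list \<Rightarrow> nat list \<Rightarrow> (nat \<Rightarrow> nat \<Rightarrow> nat list) \<Rightarrow> nat list \<Rightarrow> nat" where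
  "pess_key j tau sc W b =
     (if b = greedy_bundle j then 2 else if b = tau then 0 else if b \<notin> dev_set j W then 1
      else 3 + 2 * (rounds - first_dev j b) + (if b = sc then 0 else 1))"

lemma dev_setE:
  assumes "b \<in> dev_set j W"
  obtains l d where "l < p" "item j l < d" "d < n" "b = W l d"
  using assms unfolding dev_set_def by auto

lemma dev_set_subset: "dev_family j W \<Longrightarrow> dev_set j W \<subseteq> bundles n p"
  unfolding dev_set_def dev_family_def by auto

lemma first_dev_dev:
  assumes W: "dev_family j W" and l: "l < p" "item j l < d" "d < n"
  shows "first_dev j (W l d) = turn j l"
proof -
  have w: "W l d ! l = d" "\<forall>l'<p. turn j l' < turn j l \<longrightarrow> W l d ! l' = item j l'"
    using W l unfolding dev_family_def by auto
  have "turn j l \<in> {turn j l' | l'. l' < p \<and> W l d ! l' \<noteq> item j l'}" using w l by auto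
  moreover have "x \<in> {turn j l' | l'. l' < p \<and> W l d ! l' \<noteq> item j l'} \<Longrightarrow> turn j l \<le> x" for x
    using w by (auto simp: not_less[symmetric])
  ultimately show ?thesis unfolding first_dev_def by (intro Min_eqI) auto
qed

lemma greedy_bundle_not_dev: "dev_family j W \<Longrightarrow> greedy_bundle j \<notin> dev_set j W"
proof
  assume W: "dev_family j W" and "greedy_bundle j \<in> dev_set j W"
  then obtain l d where l: "l < p" "item j l < d" "d < n" "greedy_bundle j = W l d"
    by (auto elim: dev_setE)
  hence "W l d ! l = d" using W unfolding dev_family_def by blast
  thus False using l(1,2) by (simp add: l(4)[symmetric])
qed

lemma dev_greedy_avail:
  assumes W: "dev_family j W" and j: "j < n" and i: "i < p" and d: "item j i < d" "d < n"
  shows "W i d \<in> greedy_avail j (turn j i)"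
proof -
  have w: "W i d \<in> bundles n p" "W i d ! i = d"
    "\<forall>l<p. turn j l < turn j i \<longrightarrow> W i d ! l = item j l"
    "\<forall>l<p. turn j i < turn j l \<longrightarrow> taken l (turn j i) \<le> W i d ! l"
    using W i d unfolding dev_family_def by auto
  have "taken l (turn j i) \<le> W i d ! l" if l: "l < p" "\<not> turn j l < turn j i" for l
  proof (cases "l = i")
    case True thus ?thesis using w(2) d unfolding item_def by simp
  next
    case False
    hence "turn j l \<noteq> turn j i" using turn_inject[OF j l(1) j i] by auto
    thus ?thesis using w(4) l by simp
  qed
  thus ?thesis using w unfolding greedy_avail_def by auto
qed

text \<open>An available bundle with j's greedy item in the current category can deviate only at a
  later turn, so its key is below that of every deviation at the current turn.\<close>

lemma pess_key_greedy_avail_less: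
  assumes W: "dev_family j W" and j: "j < n" and i: "i < p"
    and b: "b \<in> greedy_avail j (turn j i)" "b ! i = item j i"
  shows "pess_key j tau sc W b < 3 + 2 * (rounds - turn j i)"
proof (cases "b \<in> dev_set j W \<and> b \<noteq> tau \<and> b \<noteq> greedy_bundle j")
  case True
  then obtain l d where l: "l < p" "item j l < d" "d < n" and b_eq: "b = W l d"
    by (auto elim: dev_setE)
  have "W l d ! l = d" using W l unfolding dev_family_def by auto
  hence "l \<noteq> i" "\<not> turn j l < turn j i" using b b_eq l(1,2) unfolding greedy_avail_def by auto
  moreover have "turn j l \<noteq> turn j i" using turn_inject[OF j l(1) j i] \<open>l \<noteq> i\<close> by auto
  ultimately have "turn j i < turn j l" by simp
  moreover have "turn j l < rounds" using turn_bounds[OF j l(1)] by simp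
  ultimately show ?thesis
    using True first_dev_dev[OF W l] b_eq unfolding pess_key_def by auto
next
  case False
  thus ?thesis unfolding pess_key_def by auto
qed

lemma pess_key_dev_ge:
  assumes W: "dev_family j W" and tau: "tau \<notin> dev_set j W"
    and i: "i < p" and d: "item j i < d" "d < n"
  shows "3 + 2 * (rounds - turn j i) \<le> pess_key j tau sc W (W i d)"
proof -
  have "W i d \<in> dev_set j W" unfolding dev_set_def using i d by auto
  thus ?thesis
    using tau greedy_bundle_not_dev[OF W] first_dev_dev[OF W i d] unfolding pess_key_def by auto
qed

lemma pess_choice_greedy:
  assumes W: "dev_family j W" and tau: "tau \<notin> dev_set j W" and j: "j < n" and i: "i < p"
  shows "pess_choice n p (key_pref n p (pess_key j tau sc W)) (greedy_state (turn j i)) j i =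
    item j i"
proof (rule pess_choice_key_pref)
  let ?k = "pess_key j tau sc W" and ?s = "greedy_state (turn j i)"
  let ?w = "worst n p (key_pref n p ?k) ?s j i"
  have avail: "available n p ?s j = greedy_avail j (turn j i)"
    by (rule available_greedy_state[OF j])
  have rem: "remaining n ?s i = {item j i..<n}"
    using remaining_greedy_state[OF i] unfolding item_def by auto
  have dev: "W i d \<in> available n p ?s j \<and> W i d ! i = d" if "item j i < d" "d < n" for d
    using dev_greedy_avail[OF W j i that] W i that unfolding avail dev_family_def by auto
  show "item j i \<in> remaining n ?s i" using rem item_less[OF j] by simp
  show "\<exists>b\<in>available n p ?s j. b ! i = d" if "d \<in> remaining n ?s i" for d
  proof (cases "d = item j i")
    case True
    thus ?thesis using greedy_bundle_avail[OF j] nth_greedy_bundle[OF i] unfolding avail by blast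
  next
    case False
    thus ?thesis using dev[of d] that unfolding rem by auto
  qed
  have w_item: "?w (item j i) \<in> greedy_avail j (turn j i)" "?w (item j i) ! i = item j i"
    using worst_key_pref_greatest[of "greedy_bundle j" n p ?s j i "item j i" ?k]
      greedy_bundle_avail[OF j] i unfolding avail by auto
  show "(?k (?w (item j i)), ?w (item j i)) < (?k (?w d), ?w d)"
    if "d \<in> remaining n ?s i" "d \<noteq> item j i" for d
  proof -
    have d: "item j i < d" "d < n" using that unfolding rem by auto
    have "(?k (W i d), W i d) \<le> (?k (?w d), ?w d)"
      using dev[OF d] by (intro worst_key_pref_greatest[THEN conjunct2, THEN conjunct2]) auto
    hence "3 + 2 * (rounds - turn j i) \<le> ?k (?w d)"
      using pess_key_dev_ge[OF W tau i d, of sc] by (auto simp: less_eq_prod_def)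
    moreover have "?k (?w (item j i)) < 3 + 2 * (rounds - turn j i)"
      by (rule pess_key_greedy_avail_less[OF W j i w_item])
    ultimately show ?thesis by (simp add: less_prod_def)
  qed
qed

lemma card_dev_set:
  assumes W: "dev_family j W" and j: "j < n"
  shows "card (dev_set j W) = (\<Sum>l<p. n - 1 - item j l)"
proof -
  have "inj_on (\<lambda>(l, d). W l d) (SIGMA l:{..<p}. {item j l<..<n})"
  proof (rule inj_onI, clarsimp)
    fix l d l' d'
    assume a: "l < p" "item j l < d" "d < n" "l' < p" "item j l' < d'" "d' < n" "W l d = W l' d'"
    have "turn j l = turn j l'"
      using first_dev_dev[OF W a(1-3)] first_dev_dev[OF W a(4-6)] a(7) by simp
    hence "l = l'" using turn_inject[of j l j l'] j a by auto
    moreover hence "d = d'" using W a unfolding dev_family_def by metis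
    ultimately show "l = l' \<and> d = d'" by simp
  qed
  hence "card (dev_set j W) = card (SIGMA l:{..<p}. {item j l<..<n})"
    unfolding dev_set_def by (rule card_image)
  also have "\<dots> = (\<Sum>l<p. n - 1 - item j l)" by (subst card_SigmaI) auto
  finally show ?thesis .
qed

lemma pess_key_greedy_bundle:
  assumes "dev_family j W" "tau \<notin> dev_set j W"
  shows "pess_key j tau sc W a = 2 \<longleftrightarrow> a = greedy_bundle j"
    and "pess_key j tau sc W a \<le> 2 \<longleftrightarrow> a \<notin> dev_set j W"
  using assms greedy_bundle_not_dev[OF assms(1)] unfolding pess_key_def by auto

lemma sum_kk_Oj:
  assumes j: "j < n"
  shows "(\<Sum>l\<in>{1..p}. int (kk n Ord j (Oj Ord j l)) - 1) = int (\<Sum>i<p. n - 1 - item j i)"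
proof -
  have "(\<Sum>l\<in>{1..p}. int (kk n Ord j (Oj Ord j l)) - 1) = (\<Sum>i<p. int (kk n Ord j i) - 1)"
    using sum.reindex_bij_betw[OF Oj_bij[OF j], of "\<lambda>i. int (kk n Ord j i) - 1"]
    by (simp add: lessThan_atLeast0)
  also have "\<dots> = (\<Sum>i<p. int (n - 1 - item j i))"
  proof (rule sum.cong)
    fix i assume "i \<in> {..<p}"
    thus "int (kk n Ord j i) - 1 = int (n - 1 - item j i)"
      using kk_eq_item[OF j, of i] item_less[OF j, of i] by auto
  qed simp
  also have "\<dots> = int (\<Sum>i<p. n - 1 - item j i)" by simp
  finally show ?thesis .
qed

lemma rank_pess_key:
  assumes W: "dev_family j W" and tau: "tau \<notin> dev_set j W" and j: "j < n"
  shows "int (rank n p (key_pref n p (pess_key j tau sc W)) (greedy_bundle j)) =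
     int n ^ p - (\<Sum>l\<in>{1..p}. int (kk n Ord j (Oj Ord j l)) - 1)"
proof -
  let ?k = "pess_key j tau sc W" and ?g = "greedy_bundle j"
  have g: "?g \<in> bundles n p" using greedy_bundle_in_bundles[OF j] .
  note key = pess_key_greedy_bundle[OF W tau, of sc]
  have key_g: "?k ?g = 2" using key(1) by blast
  have "{a \<in> bundles n p. ?k a \<le> ?k ?g} = bundles n p - dev_set j W"
    unfolding key_g key(2) by blast
  moreover have "?k a = ?k ?g \<Longrightarrow> a = ?g" for a
    unfolding key_g key(1) .
  ultimately have "rank n p (key_pref n p ?k) ?g = card (bundles n p - dev_set j W)"
    using rank_key_pref_unique_key[OF g, of ?k] by simp
  also have "\<dots> = n ^ p - (\<Sum>l<p. n - 1 - item j l)"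
    using card_Diff_subset[OF finite_subset[OF dev_set_subset[OF W] finite_bundles]
        dev_set_subset[OF W]] card_bundles card_dev_set[OF W j]
    by simp
  finally have rank: "rank n p (key_pref n p ?k) ?g = n ^ p - (\<Sum>l<p. n - 1 - item j l)" .
  have "(\<Sum>l<p. n - 1 - item j l) \<le> n ^ p"
    using card_mono[OF finite_bundles dev_set_subset[OF W]] card_bundles card_dev_set[OF W j]
    by simp
  thus ?thesis unfolding rank sum_kk_Oj[OF j] by (simp add: of_nat_diff)
qed

section \<open>The profile\<close>

definition first_agent :: nat where "first_agent = fst (Ord ! 0)"
definition first_cat :: nat where "first_cat = snd (Ord ! 0)"

lemma first_agent_cat: "first_agent < n" "first_cat < p" "turn first_agent first_cat = 0"
  using nth_Ord_bounds[OF rounds_pos] turn_nth[OF rounds_pos, of first_agent first_cat]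
  unfolding first_agent_def first_cat_def by auto

lemma item_first_agent: "item first_agent first_cat = 0"
  unfolding item_def taken_def using first_agent_cat by simp

lemma item_first_cat_pos:
  assumes j: "j < n" "j \<noteq> first_agent" shows "0 < item j first_cat"
proof -
  have "turn j first_cat \<noteq> 0"
    using turn_inject[OF j(1) first_agent_cat(2) first_agent_cat(1,2)] j first_agent_cat(3) by auto
  thus ?thesis
    using item_less_taken[OF first_agent_cat(1), of first_cat "turn j first_cat"] first_agent_cat(3)
    unfolding item_def[of j] by simp
qed

lemma Nil_not_bundle: "[] \<notin> bundles n p"
  unfolding bundles_def using p_pos by auto

text \<open>The allocation of part (3) shifts the items of the first category cyclically: every agent
  gets the item preceding her greedy one, the first agent (who took item 0) gets the last one.\<close>

definition shifted :: "nat \<Rightarrow> nat list" where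
  "shifted j = (greedy_bundle j)[first_cat :=
     (if item j first_cat = 0 then n - 1 else item j first_cat - 1)]"

lemma nth_shifted:
  "l < p \<Longrightarrow> shifted j ! l = (if l = first_cat
     then (if item j first_cat = 0 then n - 1 else item j first_cat - 1) else item j l)"
  unfolding shifted_def using first_agent_cat by (simp add: nth_list_update)

lemma shifted_in_bundles: "j < n \<Longrightarrow> shifted j \<in> bundles n p"
  unfolding bundles_def using nth_shifted item_less n_pos
  by (auto simp: shifted_def less_imp_diff_less)

lemma is_allocation_shifted: "is_allocation n p shifted"
  unfolding is_allocation_def
proof (intro conjI allI impI)
  fix j assume "j < n" thus "shifted j \<in> bundles n p" by (rule shifted_in_bundles)
next
  fix i assume i: "i < p"
  let ?pred = "\<lambda>x. if x = 0 then n - 1 else x - 1"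
  have "bij_betw (\<lambda>j. shifted j ! i) {0..<n} {0..<n} \<longleftrightarrow>
      bij_betw (if i = first_cat then ?pred \<circ> (\<lambda>j. item j i) else (\<lambda>j. item j i)) {0..<n} {0..<n}"
    by (rule bij_betw_cong) (simp add: nth_shifted[OF i])
  moreover have "bij_betw (?pred \<circ> (\<lambda>j. item j i)) {0..<n} {0..<n}"
    by (rule bij_betw_trans[OF bij_item[OF i] bij_betw_cyclic_pred])
  ultimately show "bij_betw (\<lambda>j. shifted j ! i) {0..<n} {0..<n}"
    using bij_item[OF i] by (cases "i = first_cat") simp_all
qed

lemma shifted_eq_update:
  assumes "j < n" "j \<noteq> first_agent"
  shows "shifted j = (greedy_bundle j)[first_cat := item j first_cat - 1]"
  using item_first_cat_pos[OF assms] unfolding shifted_def by simp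

lemma nth_shifted_first_cat: "shifted first_agent ! first_cat = n - 1"
  using nth_shifted[OF first_agent_cat(2)] item_first_agent by simp

lemma shifted_ne_greedy_bundle: "j < n \<Longrightarrow> 2 \<le> n \<Longrightarrow> shifted j \<noteq> greedy_bundle j"
  using nth_shifted[OF first_agent_cat(2), of j] first_agent_cat(2) by (auto split: if_splits)

lemma below_not_opt_set: "l < p \<Longrightarrow> b ! l < item j l \<Longrightarrow> b \<notin> opt_set j"
  unfolding opt_set_def by (auto split: if_splits)

lemma below_not_greedy_avail:
  assumes "l < p" "b ! l < item j l" shows "b \<notin> greedy_avail j (turn j l)"
proof
  assume "b \<in> greedy_avail j (turn j l)"
  hence "taken l (turn j l) \<le> b ! l" using assms(1) unfolding greedy_avail_def by auto
  thus False using assms(2) unfolding item_def by simp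
qed

lemma Nil_not_greedy_avail: "[] \<notin> greedy_avail j t"
  using greedy_avail_subset Nil_not_bundle by blast

lemma Nil_not_opt_set: "[] \<notin> opt_set j"
  using opt_set_subset Nil_not_bundle by blast

lemma lowered_greedy_avail_nth:
  assumes "x < item j l" "i < p" "(greedy_bundle j)[l := x] \<in> greedy_avail j (turn j i)"
  shows "(greedy_bundle j)[l := x] ! i = item j i"
proof (cases "i = l")
  case True
  thus ?thesis using assms below_not_greedy_avail[of l "(greedy_bundle j)[l := x]" j] by auto
qed (use assms in simp)

definition single_dev :: "nat \<Rightarrow> nat \<Rightarrow> nat \<Rightarrow> nat list" where
  "single_dev j l d = (greedy_bundle j)[l := d]"

lemma dev_family_single_dev:
  assumes j: "j < n" shows "dev_family j (single_dev j)"
  unfolding dev_family_def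
proof (intro allI impI conjI)
  fix l d assume l: "l < p" and d: "item j l < d" "d < n"
  show "single_dev j l d \<in> bundles n p"
    unfolding single_dev_def bundles_def using item_less[OF j] d l by (auto simp: nth_list_update)
  show "single_dev j l d ! l = d" unfolding single_dev_def using l by simp
  fix l' assume l': "l' < p"
  show "turn j l' < turn j l \<Longrightarrow> single_dev j l d ! l' = item j l'"
    using l' by (cases "l' = l") (auto simp: single_dev_def)
  show "turn j l < turn j l' \<Longrightarrow> taken l' (turn j l) \<le> single_dev j l d ! l'"
    using l' by (cases "l' = l") (auto simp: single_dev_def item_def intro: taken_mono)
qed

lemma below_not_dev_set_single_dev:
  assumes "l < p" "b ! l < item j l" shows "b \<notin> dev_set j (single_dev j)"
  using assms by (auto elim!: dev_setE simp: single_dev_def nth_list_update split: if_splits)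

lemma Nil_not_dev_set: "dev_family j W \<Longrightarrow> [] \<notin> dev_set j W"
  using dev_set_subset Nil_not_bundle by auto

text \<open>For the pessimistic first agent, the deviations in the first category also change a second
  category, so that \<open>shifted first_agent\<close> is not one of them.\<close>

definition second_cat :: nat where "second_cat = (if first_cat = 0 then 1 else 0)"

definition twisted_dev :: "nat \<Rightarrow> nat \<Rightarrow> nat list" where
  "twisted_dev l d = (if l = first_cat
     then (greedy_bundle first_agent)[first_cat := d,
            second_cat := (if item first_agent second_cat = 0 then 1 else 0)]
     else single_dev first_agent l d)"

lemma second_cat: "2 \<le> p \<Longrightarrow> second_cat < p \<and> second_cat \<noteq> first_cat"
  unfolding second_cat_def by auto

lemma dev_family_twisted_dev:
  assumes "2 \<le> p" "2 \<le> n" shows "dev_family first_agent twisted_dev"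
  unfolding dev_family_def
proof (intro allI impI)
  fix l d assume l: "l < p" and d: "item first_agent l < d" "d < n"
  show "twisted_dev l d \<in> bundles n p \<and> twisted_dev l d ! l = d \<and>
     (\<forall>l'<p. turn first_agent l' < turn first_agent l \<longrightarrow>
        twisted_dev l d ! l' = item first_agent l') \<and>
     (\<forall>l'<p. turn first_agent l < turn first_agent l' \<longrightarrow>
        taken l' (turn first_agent l) \<le> twisted_dev l d ! l')"
  proof (cases "l = first_cat")
    case False
    thus ?thesis
      using dev_family_single_dev[OF first_agent_cat(1)] l d
      unfolding dev_family_def twisted_dev_def by simp
  next
    case True
    have "twisted_dev l d \<in> bundles n p"
      unfolding bundles_def twisted_dev_def
      using True second_cat[OF assms(1)] item_less[OF first_agent_cat(1)] d assms(2)
        first_agent_cat(2)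
      by (auto simp: nth_list_update)
    thus ?thesis
      using True second_cat[OF assms(1)] first_agent_cat
      unfolding twisted_dev_def by (simp add: taken_def)
  qed
qed

lemma shifted_not_dev_set_twisted_dev:
  assumes "2 \<le> p" "2 \<le> n" shows "shifted first_agent \<notin> dev_set first_agent twisted_dev"
proof
  assume "shifted first_agent \<in> dev_set first_agent twisted_dev"
  then obtain l d where ld: "l < p" "item first_agent l < d" "d < n"
    and eq: "shifted first_agent = twisted_dev l d" by (rule dev_setE)
  have c2: "second_cat < p" "second_cat \<noteq> first_cat" using second_cat[OF assms(1)] by auto
  show False
  proof (cases "l = first_cat")
    case True
    have "twisted_dev l d ! second_cat \<noteq> item first_agent second_cat"
      unfolding twisted_dev_def using True c2 by simp
    moreover have "shifted first_agent ! second_cat = item first_agent second_cat"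
      using nth_shifted[OF c2(1)] c2(2) by simp
    ultimately show False using eq by simp
  next
    case False
    have "twisted_dev l d ! first_cat = 0"
      unfolding twisted_dev_def single_dev_def using False first_agent_cat item_first_agent by simp
    thus False using eq nth_shifted_first_cat assms(2) by simp
  qed
qed

lemma opt_set_first_agent:
  assumes "turn_K first_agent = 0" shows "opt_set first_agent = bundles n p"
proof -
  have "item first_agent l = 0" if "l < p" for l
    using taken_eq_item_after_turn_K[OF first_agent_cat(1) that, of 0] assms
    by (simp add: taken_def)
  thus ?thesis unfolding opt_set_def assms by auto
qed

definition lowered_cat :: nat where
  "lowered_cat = (SOME l. l < p \<and> 0 < item first_agent l)"

lemma lowered_cat:
  assumes "0 < turn_K first_agent" shows "lowered_cat < p" "0 < item first_agent lowered_cat"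
proof -
  have "\<exists>l<p. taken l 0 < item first_agent l"
    using taken_less_item_before_turn_K[OF first_agent_cat(1,2)] first_agent_cat(3) assms by auto
  hence "\<exists>l. l < p \<and> 0 < item first_agent l" by auto
  from someI_ex[OF this] show "lowered_cat < p" "0 < item first_agent lowered_cat"
    unfolding lowered_cat_def by auto
qed

definition lowered :: "nat list" where
  "lowered = (greedy_bundle first_agent)[lowered_cat := item first_agent lowered_cat - 1]"

lemma opt_tops_Nil: "opt_tops j [] []"
  unfolding opt_tops_def using Nil_not_opt_set Nil_not_greedy_avail by blast

lemma opt_tops_other:
  assumes j: "j < n" "j \<noteq> first_agent" shows "opt_tops j (shifted j) []"
proof -
  have below: "shifted j ! first_cat < item j first_cat"
    using nth_shifted[OF first_agent_cat(2)] item_first_cat_pos[OF j] by simp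
  show ?thesis
    unfolding opt_tops_def
    using below_not_opt_set[OF first_agent_cat(2) below] lowered_greedy_avail_nth[of _ j first_cat]
      shifted_eq_update[OF j] item_first_cat_pos[OF j] Nil_not_opt_set Nil_not_greedy_avail
    by auto
qed

lemma opt_tops_first_agent:
  assumes K: "0 < turn_K first_agent" shows "opt_tops first_agent lowered (shifted first_agent)"
proof -
  note c = lowered_cat[OF K] and f = first_agent_cat
  have n2: "2 \<le> n" using c(2) item_less[OF f(1), of lowered_cat] by simp
  have "lowered \<notin> opt_set first_agent"
    using below_not_opt_set[of lowered_cat lowered] c unfolding lowered_def by simp
  moreover have "shifted first_agent \<notin> opt_set first_agent"
    using nth_shifted_first_cat item_first_agent f K n2 unfolding opt_set_def turn_K_def by auto
  moreover have "lowered ! i = item first_agent i"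
    if "i < p" "lowered \<in> greedy_avail first_agent (turn first_agent i)" for i
    using lowered_greedy_avail_nth that c unfolding lowered_def by simp
  moreover have "lowered \<in> greedy_avail first_agent (turn first_agent i)"
    if "i < p" "shifted first_agent \<in> greedy_avail first_agent (turn first_agent i)" for i
  proof (cases "turn first_agent i = 0")
    case True
    have "lowered \<in> bundles n p"
      unfolding lowered_def bundles_def using c item_less[OF f(1)]
      by (auto simp: nth_list_update less_imp_diff_less)
    thus ?thesis unfolding greedy_avail_def True by (simp add: taken_def)
  next
    case False
    hence "shifted first_agent ! first_cat = item first_agent first_cat"
      using that(2) f unfolding greedy_avail_def by auto
    thus ?thesis using nth_shifted_first_cat item_first_agent n2 by simp
  qed
  ultimately show ?thesis unfolding opt_tops_def by blast
qed

definition profile :: "(nat \<Rightarrow> bool) \<Rightarrow> nat \<Rightarrow> nat list rel" where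
  "profile optim j =
     (if optim j then key_pref n p
        (if j \<noteq> first_agent then opt_key j (shifted j) [] []
         else if turn_K j = 0 then opt_key j [] [] (shifted j)
         else opt_key j lowered (shifted j) [])
      else key_pref n p
        (if j \<noteq> first_agent then pess_key j (shifted j) [] (single_dev j)
         else if 2 \<le> p \<and> 2 \<le> n then pess_key j (shifted j) [] twisted_dev
         else pess_key j [] (shifted j) (single_dev j)))"

lemma profile_cases:
  assumes j: "j < n"
  obtains (opt) t1 t2 sc where "optim j" "profile optim j = key_pref n p (opt_key j t1 t2 sc)"
      "opt_tops j t1 t2"
    | (pess) tau sc W where "\<not> optim j" "profile optim j = key_pref n p (pess_key j tau sc W)"
      "dev_family j W" "tau \<notin> dev_set j W"
proof (cases "optim j")
  case True
  thus ?thesis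
    using opt opt_tops_other[OF j] opt_tops_Nil opt_tops_first_agent unfolding profile_def
    by (cases "j = first_agent"; cases "turn_K j = 0") auto
next
  case False
  have "shifted j \<notin> dev_set j (single_dev j)" if "j \<noteq> first_agent"
    using below_not_dev_set_single_dev[OF first_agent_cat(2)] nth_shifted[OF first_agent_cat(2)]
      item_first_cat_pos[OF j that] by simp
  thus ?thesis
    using pess False dev_family_single_dev[OF j] dev_family_twisted_dev
      shifted_not_dev_set_twisted_dev Nil_not_dev_set[OF dev_family_single_dev[OF j]]
    unfolding profile_def by (cases "j = first_agent"; cases "2 \<le> p \<and> 2 \<le> n") auto
qed

lemma is_profile_profile: "is_profile n p (profile optim)"
  unfolding is_profile_def profile_def by (simp add: is_pref_key_pref)

lemma csam_profile: "j < n \<Longrightarrow> csam n p Ord optim (profile optim) j = greedy_bundle j"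
proof (rule csam_eq_greedy_bundle)
  fix t j i assume t: "t < rounds" and o: "Ord ! t = (j, i)"
  have j: "j < n" and i: "i < p" using nth_Ord_bounds[OF t] o by auto
  have t_eq: "t = turn j i" using turn_nth[OF t o] by simp
  show "(if optim j then opt_choice n p (profile optim j) (greedy_state t) j i
         else pess_choice n p (profile optim j) (greedy_state t) j i) = item j i"
  proof (rule profile_cases[OF j, where optim = optim])
    fix t1 t2 sc
    assume "optim j" "profile optim j = key_pref n p (opt_key j t1 t2 sc)" "opt_tops j t1 t2"
    thus ?thesis using opt_choice_greedy[OF j i] t_eq by simp
  next
    fix tau sc W
    assume "\<not> optim j" "profile optim j = key_pref n p (pess_key j tau sc W)"
      "dev_family j W" "tau \<notin> dev_set j W"
    thus ?thesis using pess_choice_greedy[OF _ _ j i] t_eq by simp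
  qed
qed

lemma rank_shifted_other:
  assumes j: "j < n" "j \<noteq> first_agent" shows "rank n p (profile optim j) (shifted j) = 1"
proof -
  have n2: "2 \<le> n" using item_first_cat_pos[OF j] item_less[OF j(1), of first_cat] by simp
  have ne: "shifted j \<noteq> greedy_bundle j" by (rule shifted_ne_greedy_bundle[OF j(1) n2])
  have s: "shifted j \<in> bundles n p" by (rule shifted_in_bundles[OF j(1)])
  have "rank n p (key_pref n p (opt_key j (shifted j) [] [])) (shifted j) = 1"
    by (rule rank_key_pref_top[OF s]) (auto simp: opt_key_def)
  moreover have "rank n p (key_pref n p (pess_key j (shifted j) [] (single_dev j))) (shifted j) = 1"
    by (rule rank_key_pref_top[OF s]) (auto simp: pess_key_def ne)
  ultimately show ?thesis unfolding profile_def using j by simp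
qed

lemma rank_shifted_first_pess_single:
  assumes n2: "2 \<le> n" and p: "p = 1"
  shows "rank n p
      (key_pref n p (pess_key first_agent [] (shifted first_agent) (single_dev first_agent)))
      (shifted first_agent) \<le> 2"
proof -
  let ?k = "pess_key first_agent [] (shifted first_agent) (single_dev first_agent)"
  let ?g = "greedy_bundle first_agent" and ?s = "shifted first_agent"
  have c: "first_cat = 0" using first_agent_cat(2) p by simp
  have only0: "k < p \<Longrightarrow> k = 0" for k using p by simp
  have p0: "0 < p" using p by simp
  have dev: "a \<in> dev_set first_agent (single_dev first_agent) \<and>
      first_dev first_agent a = turn first_agent 0" if a: "a \<in> bundles n p" "a \<noteq> ?g" for a
  proof -
    have len: "length a = p" and d_lt: "a ! 0 < n" using a p0 unfolding bundles_def by auto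
    define d where "d = a ! 0"
    have a_eq: "a = single_dev first_agent 0 d"
    proof (rule nth_equalityI)
      show "length a = length (single_dev first_agent 0 d)"
        using len unfolding single_dev_def by simp
      fix k assume "k < length a"
      hence "k = 0" using len only0 by simp
      thus "a ! k = single_dev first_agent 0 d ! k" unfolding single_dev_def d_def using p0 by simp
    qed
    have "?g ! 0 = 0" using c item_first_agent p0 by simp
    hence "single_dev first_agent 0 0 = ?g" unfolding single_dev_def by (metis list_update_id)
    hence "item first_agent 0 < d" using a(2) a_eq c item_first_agent by (cases "d = 0") auto
    thus ?thesis
      unfolding a_eq dev_set_def
      using first_dev_dev[OF dev_family_single_dev[OF first_agent_cat(1)] p0 _ d_lt[folded d_def]]
        p0 d_lt[folded d_def]
      by force
  qed
  have "?s \<noteq> ?g" by (rule shifted_ne_greedy_bundle[OF first_agent_cat(1) n2])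
  thus ?thesis
    using dev[of ?s] dev shifted_in_bundles[OF first_agent_cat(1)] Nil_not_bundle
    by (intro rank_key_pref_le_2[of _ n p ?g]) (auto simp: pess_key_def)
qed

lemma rank_shifted_first: "rank n p (profile optim first_agent) (shifted first_agent) \<le> 2"
proof -
  let ?g = "greedy_bundle first_agent" and ?s = "shifted first_agent"
  have s: "?s \<in> bundles n p" using shifted_in_bundles[OF first_agent_cat(1)] .
  have ne: "?s \<noteq> ?g" if "2 \<le> n"
    using shifted_ne_greedy_bundle[OF first_agent_cat(1) that] .
  consider "n = 1"
    | "2 \<le> n" "optim first_agent" "turn_K first_agent = 0"
    | "2 \<le> n" "optim first_agent" "turn_K first_agent \<noteq> 0"
    | "2 \<le> n" "\<not> optim first_agent" "2 \<le> p"
    | "2 \<le> n" "\<not> optim first_agent" "p = 1"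
    using n_pos p_pos by linarith
  thus ?thesis
  proof cases
    case 1
    thus ?thesis using rank_le_card_bundles[of n p "profile optim first_agent" ?s] by simp
  next
    case 2
    have "rank n p (key_pref n p (opt_key first_agent [] [] ?s)) ?s \<le> 2"
      using s ne[OF 2(1)] Nil_not_bundle opt_set_first_agent[OF 2(3)]
      by (intro rank_key_pref_le_2[of _ n p ?g]) (auto simp: opt_key_def)
    thus ?thesis using 2 unfolding profile_def by simp
  next
    case 3
    have "rank n p (key_pref n p (opt_key first_agent lowered ?s [])) ?s \<le> 2"
      using s by (intro rank_key_pref_le_2[of _ n p lowered]) (auto simp: opt_key_def)
    thus ?thesis using 3 unfolding profile_def by simp
  next
    case 4
    have "rank n p (key_pref n p (pess_key first_agent ?s [] twisted_dev)) ?s = 1"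
      by (rule rank_key_pref_top[OF s]) (auto simp: pess_key_def ne[OF 4(1)])
    thus ?thesis using 4 unfolding profile_def by simp
  next
    case 5
    thus ?thesis using rank_shifted_first_pess_single[OF 5(1,3)] unfolding profile_def by simp
  qed
qed

lemma rank_csam_opt:
  assumes j: "j < n" and "optim j"
  shows "int (rank n p (profile optim j) (csam n p Ord optim (profile optim) j)) =
    int n ^ p + 1 - (\<Prod>l\<in>{Kj p Ord j..p}. int (kk n Ord j (Oj Ord j l)))"
proof (rule profile_cases[OF j, where optim = optim])
  fix t1 t2 sc
  assume "optim j" "profile optim j = key_pref n p (opt_key j t1 t2 sc)" "opt_tops j t1 t2"
  thus ?thesis using rank_opt_key[OF j] csam_profile[OF j] by simp
qed (use assms in simp)

lemma rank_csam_pess: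
  assumes j: "j < n" and "\<not> optim j"
  shows "int (rank n p (profile optim j) (csam n p Ord optim (profile optim) j)) =
    int n ^ p - (\<Sum>l\<in>{1..p}. int (kk n Ord j (Oj Ord j l)) - 1)"
proof (rule profile_cases[OF j, where optim = optim])
  fix tau sc W
  assume "\<not> optim j" "profile optim j = key_pref n p (pess_key j tau sc W)"
    "dev_family j W" "tau \<notin> dev_set j W"
  thus ?thesis using rank_pess_key[OF _ _ j] csam_profile[OF j] by simp
qed (use assms in simp)

end

theorem theorem2:
  fixes n p :: nat and Ord :: "(nat \<times> nat) list" and optim :: "nat \<Rightarrow> bool"
  assumes "n \<ge> 1" and "p \<ge> 1" and "valid_order n p Ord"
  shows "\<exists>P. is_profile n p P \<and>
    (\<forall>j<n. optim j \<longrightarrow>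
       int (rank n p (P j) (csam n p Ord optim P j)) =
         int n ^ p + 1 - (\<Prod>l\<in>{Kj p Ord j..p}. int (kk n Ord j (Oj Ord j l)))) \<and>
    (\<forall>j<n. \<not> optim j \<longrightarrow>
       int (rank n p (P j) (csam n p Ord optim P j)) =
         int n ^ p - (\<Sum>l\<in>{1..p}. int (kk n Ord j (Oj Ord j l)) - 1)) \<and>
    (\<exists>A. is_allocation n p A \<and>
       (\<exists>j0<n. (\<forall>j<n. j \<noteq> j0 \<longrightarrow> rank n p (P j) (A j) = 1) \<and>
               rank n p (P j0) (A j0) \<le> 2))"
proof -
  interpret picking_order n p Ord using assms by unfold_locales
  have "\<exists>j0<n. (\<forall>j<n. j \<noteq> j0 \<longrightarrow> rank n p (profile optim j) (shifted j) = 1) \<and>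
      rank n p (profile optim j0) (shifted j0) \<le> 2"
    using first_agent_cat(1) rank_shifted_other rank_shifted_first by blast
  thus ?thesis
    using is_profile_profile rank_csam_opt rank_csam_pess is_allocation_shifted by blast
qed

end
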